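(* For all $\alpha,\beta\ge 0$ one has $I(\alpha,\beta)<\sqrt{\pi/2}$, and $\sup_{\alpha,\beta\ge 0}I(\alpha,\beta)=\lim_{t\to+\infty}I(t,0)=\sqrt{\pi/2}$.
   Context: For $\alpha,\beta\ge 0$ define $I(\alpha,\beta)=\exp\left(-\frac{\alpha\beta}{2}\right)\int_{-\alpha}^{\beta}\exp\left(-\frac{\sigma^2}{2}\right)d\sigma$. *)

theory Defs
  imports "HOL-Analysis.Analysis"
begin

definition I :: "real \<Rightarrow> real \<Rightarrow> real" where
  "I \<alpha> \<beta> = exp (-(\<alpha> * \<beta>) / 2) * integral {-\<alpha>..\<beta>} (\<lambda>\<sigma>. exp (-(\<sigma>^2) / 2))"

end

theory Submission
  imports Defs "HOL-Probability.Probability"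
begin

(* Pair each sigma in [-alpha, beta] with its mirror image beta - alpha - sigma. Writing
   sigma = c + v with c = (beta - alpha)/2 and h = (alpha + beta)/2, the two values of the
   integrand of I add up to exp (-(v^2 + h^2)/2) * 2 cosh (c v), while the same two values of
   the shifted Gaussian exp (-(sigma + alpha)^2/2) add up to exp (-(v^2 + h^2)/2) * 2 cosh (h v).
   Since |c| <= h, integrating gives I(alpha, beta) <= G(alpha + beta), where
   G(t) = integral of exp (-x^2/2) over [0, t]. G is strictly increasing with limit sqrt (pi/2),
   so the bound is strict, and I(t, 0) = G(t) shows that it is attained in the limit. *)

lemma has_integral_reflect_Icc_real:
  fixes f :: "real \<Rightarrow> 'a::banach"
  shows "((\<lambda>x. f (a + b - x)) has_integral i) {a..b} \<longleftrightarrow> (f has_integral i) {a..b}"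
proof -
  have "((\<lambda>x. f (a + b - x)) has_integral i) {a..b} \<longleftrightarrow>
        ((\<lambda>x. f (- x)) has_integral i) {-b..-a}"
    using has_integral_shift_Icc_real[of "\<lambda>x. f (- x)" "-(a+b)" i a b]
    by (simp add: o_def add.commute)
  then show ?thesis by (simp add: add.commute)
qed

lemma integral_le_by_reflection:
  fixes f g :: "real \<Rightarrow> real"
  assumes f: "f integrable_on {a..b}" and g: "g integrable_on {a..b}"
    and le: "\<And>x. x \<in> {a..b} \<Longrightarrow> f x + f (a + b - x) \<le> g x + g (a + b - x)"
  shows "integral {a..b} f \<le> integral {a..b} g"
proof -
  have reflected: "((\<lambda>x. h (a + b - x)) has_integral integral {a..b} h) {a..b}"
    if "h integrable_on {a..b}" for h :: "real \<Rightarrow> real"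
    using that by (simp add: has_integral_reflect_Icc_real integrable_integral)
  have "2 * integral {a..b} f = integral {a..b} (\<lambda>x. f x + f (a + b - x))"
    using has_integral_add[OF integrable_integral[OF f] reflected[OF f]]
    by (simp add: integral_unique)
  also have "\<dots> \<le> integral {a..b} (\<lambda>x. g x + g (a + b - x))"
    using f g reflected le by (intro integral_le integrable_add) auto
  also have "\<dots> = 2 * integral {a..b} g"
    using has_integral_add[OF integrable_integral[OF g] reflected[OF g]]
    by (simp add: integral_unique)
  finally show ?thesis by simp
qed

lemma exp_plus_exp_minus_mono:
  fixes u w :: real
  assumes "\<bar>u\<bar> \<le> \<bar>w\<bar>"
  shows "exp u + exp (- u) \<le> exp w + exp (- w)"
proof -
  have "cosh \<bar>u\<bar> \<le> cosh \<bar>w\<bar>"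
    using assms by (subst cosh_real_nonneg_le_iff) auto
  then have "cosh u \<le> cosh w" by (simp only: cosh_real_abs)
  then show ?thesis by (simp add: cosh_def)
qed

lemma cSUP_eq_by_tendsto:
  fixes f :: "'a \<Rightarrow> 'b::{conditionally_complete_linorder, linorder_topology}"
  assumes upper: "\<And>x. x \<in> A \<Longrightarrow> f x \<le> L"
    and "F \<noteq> bot" and inside: "\<forall>\<^sub>F t in F. g t \<in> A"
    and lim: "((\<lambda>t. f (g t)) \<longlongrightarrow> L) F"
  shows "(SUP x\<in>A. f x) = L"
proof (rule antisym)
  have "A \<noteq> {}"
    using eventually_happens'[OF \<open>F \<noteq> bot\<close> inside] by auto
  then show "(SUP x\<in>A. f x) \<le> L"
    using upper by (rule cSUP_least)
  have bounded: "bdd_above (f ` A)"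
    using upper by (auto intro!: bdd_aboveI)
  from inside have "\<forall>\<^sub>F t in F. f (g t) \<le> (SUP x\<in>A. f x)"
    by eventually_elim (rule cSUP_upper[OF _ bounded])
  then show "L \<le> (SUP x\<in>A. f x)"
    using \<open>F \<noteq> bot\<close> lim by (intro tendsto_le[OF _ tendsto_const])
qed

lemma has_bochner_integral_gaussian_half_line:
  "has_bochner_integral lborel (\<lambda>x. indicator {0..} x *\<^sub>R exp (- x\<^sup>2 / 2)) (sqrt (pi / 2))"
proof -
  let ?f = "\<lambda>x::real. indicator {0..} x *\<^sub>R exp (- x\<^sup>2 / 2)"
  have scaled: "?f (0 + sqrt 2 * x) = indicator {0..} x *\<^sub>R exp (- x\<^sup>2)" for x
    by (auto simp: indicator_def power_mult_distrib zero_le_mult_iff)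
  have "integrable lborel ?f"
    using lborel_integrable_real_affine_iff[of "sqrt 2" ?f 0, unfolded scaled] gaussian_moment_0
    by (simp add: has_bochner_integral_iff)
  moreover have "(\<integral>x. ?f x \<partial>lborel) = sqrt 2 * (sqrt pi / 2)"
    using lborel_integral_real_affine[of "sqrt 2" ?f 0, unfolded scaled] gaussian_moment_0
    by (simp add: has_bochner_integral_iff)
  moreover have "sqrt 2 * (sqrt pi / 2) = sqrt (pi / 2)"
    by (simp add: real_sqrt_divide field_simps)
  ultimately show ?thesis
    by (simp add: has_bochner_integral_iff)
qed

definition gauss_area :: "real \<Rightarrow> real" where
  "gauss_area t = integral {0..t} (\<lambda>x. exp (- x\<^sup>2 / 2))"

lemma gaussian_integrable_on [simp]: "(\<lambda>x::real. exp (- x\<^sup>2 / 2)) integrable_on {a..b}"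
  by (intro integrable_continuous_interval continuous_intros) auto

lemma gauss_area_tendsto: "(gauss_area \<longlongrightarrow> sqrt (pi / 2)) at_top"
proof -
  let ?e = "\<lambda>x::real. exp (- x\<^sup>2 / 2)"
  have "((\<lambda>t. set_lebesgue_integral lborel {0..t} ?e) \<longlongrightarrow> set_lebesgue_integral lborel {0..} ?e) at_top"
    using has_bochner_integral_gaussian_half_line
    by (intro tendsto_set_lebesgue_integral_at_top)
       (auto simp: set_integrable_def has_bochner_integral_iff)
  moreover have "set_lebesgue_integral lborel {0..} ?e = sqrt (pi / 2)"
    using has_bochner_integral_gaussian_half_line
    by (simp add: set_lebesgue_integral_def has_bochner_integral_iff)
  moreover have "set_lebesgue_integral lborel {0..t} ?e = gauss_area t" for t
    unfolding gauss_area_def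
    by (intro set_borel_integral_eq_integral(2) borel_integrable_atLeastAtMost' continuous_intros) auto
  ultimately show ?thesis by simp
qed

lemma gauss_area_combine:
  assumes "0 \<le> s" "s \<le> t"
  shows "gauss_area t = gauss_area s + integral {s..t} (\<lambda>x. exp (- x\<^sup>2 / 2))"
  using Henstock_Kurzweil_Integration.integral_combine[OF assms gaussian_integrable_on]
  by (simp add: gauss_area_def)

lemma gauss_area_strict_mono:
  assumes "0 \<le> s" "s < t"
  shows "gauss_area s < gauss_area t"
proof -
  have "0 < (t - s) * exp (- t\<^sup>2 / 2)"
    using assms by simp
  also have "\<dots> = integral {s..t} (\<lambda>x. exp (- t\<^sup>2 / 2))"
    using assms by simp
  also have "\<dots> \<le> integral {s..t} (\<lambda>x. exp (- x\<^sup>2 / 2))"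
  proof (intro integral_le integrable_const_ivl gaussian_integrable_on)
    fix x assume "x \<in> {s..t}"
    with assms have "x\<^sup>2 \<le> t\<^sup>2" by (intro power_mono) auto
    then show "exp (- t\<^sup>2 / 2) \<le> exp (- x\<^sup>2 / 2)" by simp
  qed
  finally show ?thesis
    using gauss_area_combine[of s t] assms by simp
qed

lemma gauss_area_less:
  assumes "0 \<le> t"
  shows "gauss_area t < sqrt (pi / 2)"
proof -
  have "\<forall>\<^sub>F s in at_top. gauss_area (t + 1) \<le> gauss_area s"
    using eventually_ge_at_top[of "t + 1"]
    by eventually_elim (use assms gauss_area_strict_mono in \<open>force simp: order_le_less\<close>)
  then have "gauss_area (t + 1) \<le> sqrt (pi / 2)"
    by (intro tendsto_lowerbound[OF gauss_area_tendsto]) simp_all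
  with gauss_area_strict_mono[of t "t + 1"] assms show ?thesis by simp
qed

lemma gaussian_reflection_pair_le:
  fixes a b x :: real
  assumes "0 \<le> a" "0 \<le> b"
  shows "exp (- (x\<^sup>2 + a * b) / 2) + exp (- ((b - a - x)\<^sup>2 + a * b) / 2)
       \<le> exp (- (x + a)\<^sup>2 / 2) + exp (- (b - x)\<^sup>2 / 2)"
proof -
  define h c v where "h = (a + b) / 2" and "c = (b - a) / 2" and "v = x - (b - a) / 2"
  define E where "E = exp (- (v\<^sup>2 + h\<^sup>2) / 2)"
  have "exp (- (x\<^sup>2 + a * b) / 2) = E * exp (- (c * v))"
    and "exp (- ((b - a - x)\<^sup>2 + a * b) / 2) = E * exp (c * v)"
    and "exp (- (x + a)\<^sup>2 / 2) = E * exp (- (h * v))"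
    and "exp (- (b - x)\<^sup>2 / 2) = E * exp (h * v)"
    unfolding E_def mult_exp_exp
    by (rule arg_cong[where f = exp]; simp add: h_def c_def v_def power2_eq_square field_simps)+
  moreover have "exp (c * v) + exp (- (c * v)) \<le> exp (h * v) + exp (- (h * v))"
    using assms by (intro exp_plus_exp_minus_mono) (simp add: h_def c_def abs_mult mult_right_mono)
  moreover have "0 < E" by (simp add: E_def)
  ultimately show ?thesis
    by (smt (verit) distrib_left mult_left_mono)
qed

lemma I_eq_integral: "I a b = integral {-a..b} (\<lambda>x. exp (- (x\<^sup>2 + a * b) / 2))"
  unfolding I_def integral_mult_right[symmetric]
  by (rule integral_cong) (simp add: mult_exp_exp field_simps)

lemma integral_shifted_gaussian:
  "integral {-a..b} (\<lambda>x. exp (- (x + a)\<^sup>2 / 2)) = gauss_area (a + b)"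
  using integral_shift_Icc_real[of "-a" b "\<lambda>x. exp (- x\<^sup>2 / 2)" a]
  by (simp add: gauss_area_def o_def add.commute)

lemma I_le_gauss_area:
  assumes "0 \<le> a" "0 \<le> b"
  shows "I a b \<le> gauss_area (a + b)"
  unfolding I_eq_integral integral_shifted_gaussian[symmetric]
proof (rule integral_le_by_reflection)
  fix x
  show "exp (- (x\<^sup>2 + a * b) / 2) + exp (- ((- a + b - x)\<^sup>2 + a * b) / 2)
      \<le> exp (- (x + a)\<^sup>2 / 2) + exp (- ((- a + b - x) + a)\<^sup>2 / 2)"
    using gaussian_reflection_pair_le[OF assms, of x] by (simp add: algebra_simps)
qed (intro integrable_continuous_interval continuous_intros; simp)+

lemma I_zero_right: "I t 0 = gauss_area t"
  using Henstock_Kurzweil_Integration.integral_reflect_real[of t 0 "\<lambda>x. exp (- x\<^sup>2 / 2)"]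
  by (simp add: I_def gauss_area_def)

theorem mainTheorem6:
  shows "(\<forall>\<alpha> \<beta>. \<alpha> \<ge> 0 \<longrightarrow> \<beta> \<ge> 0 \<longrightarrow> I \<alpha> \<beta> < sqrt (pi / 2))
    \<and> (SUP p\<in>{p::real\<times>real. fst p \<ge> 0 \<and> snd p \<ge> 0}. I (fst p) (snd p)) = sqrt (pi / 2)
    \<and> ((\<lambda>t. I t 0) \<longlongrightarrow> sqrt (pi / 2)) at_top"
proof (intro conjI)
  show bound: "\<forall>\<alpha> \<beta>. \<alpha> \<ge> 0 \<longrightarrow> \<beta> \<ge> 0 \<longrightarrow> I \<alpha> \<beta> < sqrt (pi / 2)"
    by (meson I_le_gauss_area add_nonneg_nonneg gauss_area_less le_less_trans)
  show limit: "((\<lambda>t. I t 0) \<longlongrightarrow> sqrt (pi / 2)) at_top"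
    using gauss_area_tendsto by (simp add: I_zero_right)
  show "(SUP p\<in>{p::real\<times>real. fst p \<ge> 0 \<and> snd p \<ge> 0}. I (fst p) (snd p)) = sqrt (pi / 2)"
  proof (rule cSUP_eq_by_tendsto[where g = "\<lambda>t. (t, 0)" and F = at_top])
    show "\<forall>\<^sub>F t in at_top. (t, 0) \<in> {p::real\<times>real. fst p \<ge> 0 \<and> snd p \<ge> 0}"
      using eventually_ge_at_top[of 0] by eventually_elim simp
  qed (use bound limit in \<open>auto intro: less_imp_le\<close>)
qed

end
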